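(* Consider $K$ simultaneous hypothesis testing problems $H_{0k}:\theta_k=0$ versus $H_{Ak}:\theta_k\in\Theta_k$, $k\in[K]=\{1,\dots,K\}$, with unknown true states $h=(h_1,\dots,h_K)\in\{0,1\}^K$ ($h_k=0$ iff $H_{0k}$ holds). Assume: (A1) for each $k$ there is a p-value $p_k$ which is uniformly distributed on $[0,1]$ when $h_k=0$; the $K$ p-values are independent; and whenever $h_k=1$ there is a sequence $\theta_{k_1},\theta_{k_2},\dots\in\Theta_k$ with $\lim_{j\to\infty}\mathbb{P}_{\theta_{k_j}}(p_k<\epsilon)=1$ for every $\epsilon>0$. Let $D=(D_1,\dots,D_K):[0,1]^K\to\{0,1\}^K$ be a monotone testing policy satisfying (A2) for all $i,k\in[K]$ and all $\mathbf p\in[0,1]^K$, $\lim_{p_i\downarrow 0}D_k(\mathbf p)=D_k(p_1,\dots,p_{i-1},0,p_{i+1},\dots,p_K)$. Then $D$ strongly controls the FWER at level $\alpha$ if and only if $$\int_{[0,1]^{|\mathcal I|}}\max_{k\in\mathcal I}D_k(\mathbf p^0_{\mathcal I})\,d\mathbf p_{\mathcal I}\le\alpha\quad\text{for all }\mathcal I\subseteq[K].$$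
   Context: A testing policy $D:[0,1]^K\to\{0,1\}^K$ rejects $H_{0k}$ iff $D_k(\mathbf p)=1$. $D$ is monotone if $\mathbf p'\preceq\mathbf p$ (coordinatewise $p'_k\le p_k$) implies $D(\mathbf p')\succeq D(\mathbf p)$ coordinatewise. $D$ strongly controls the FWER at level $\alpha$ if $\mathbb{P}_{\theta,h}\big(\sum_{k=1}^K(1-h_k)D_k(\mathbf p)>0\big)\le\alpha$ for every $h\in\{0,1\}^K$ and every $\theta$ with $\theta_k=0$ when $h_k=0$ and $\theta_k\in\Theta_k$ when $h_k=1$. For $\mathcal I=\{j_1,\dots,j_{|\mathcal I|}\}\subseteq[K]$, the projected vector $\mathbf p^0_{\mathcal I}\in[0,1]^K$ has $k$-th coordinate $p_k$ if $k\in\mathcal I$ and $0$ otherwise; the reduced vector $\mathbf p_{\mathcal I}=(p_{j_1},\dots,p_{j_{|\mathcal I|}})$, and the integral is over the coordinates in $\mathcal I$ (Lebesgue measure on $[0,1]^{|\mathcal I|}$). *)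

theory Defs
  imports "HOL-Probability.Probability"
begin

(* Hypotheses are indexed by k < K (i.e. [K] is rendered as {..<K}).
  A testing policy is D :: (nat \<Rightarrow> real) \<Rightarrow> nat \<Rightarrow> bool, where D p k = True means D_k(p) = 1.
  The truth state h_k \<in> {0,1} is rendered as h k :: bool (h k = True iff h_k = 1). *)

definition unit_cube :: "nat \<Rightarrow> (nat \<Rightarrow> real) set" where
  "unit_cube K = PiE {..<K} (\<lambda>_. {0..1})"

definition unif01 :: "real measure" where
  "unif01 = restrict_space lborel {0..1}"

definition monotone_policy :: "nat \<Rightarrow> ((nat \<Rightarrow> real) \<Rightarrow> nat \<Rightarrow> bool) \<Rightarrow> bool" where
  "monotone_policy K D \<longleftrightarrow>
     (\<forall>p\<in>unit_cube K. \<forall>p'\<in>unit_cube K. (\<forall>k<K. p' k \<le> p k) \<longrightarrow> (\<forall>k<K. D p k \<longrightarrow> D p' k))"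

definition joint_law :: "nat \<Rightarrow> (nat \<Rightarrow> 'a \<Rightarrow> real measure) \<Rightarrow> (nat \<Rightarrow> 'a) \<Rightarrow> (nat \<Rightarrow> real) measure" where
  "joint_law K P \<theta> = PiM {..<K} (\<lambda>k. P k (\<theta> k))"

definition strong_FWER_control ::
  "nat \<Rightarrow> (nat \<Rightarrow> 'a::zero set) \<Rightarrow> (nat \<Rightarrow> 'a \<Rightarrow> real measure) \<Rightarrow> ((nat \<Rightarrow> real) \<Rightarrow> nat \<Rightarrow> bool) \<Rightarrow> real \<Rightarrow> bool" where
  "strong_FWER_control K \<Theta> P D \<alpha> \<longleftrightarrow>
     (\<forall>h :: nat \<Rightarrow> bool. \<forall>\<theta> :: nat \<Rightarrow> 'a.
        (\<forall>k<K. (\<not> h k \<longrightarrow> \<theta> k = 0) \<and> (h k \<longrightarrow> \<theta> k \<in> \<Theta> k)) \<longrightarrow>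
        measure (joint_law K P \<theta>)
          {p \<in> space (joint_law K P \<theta>). (\<Sum>k<K. (if h k then 0 else 1) * (if D p k then 1 else 0::nat)) > 0}
        \<le> \<alpha>)"

definition proj0 :: "nat \<Rightarrow> nat set \<Rightarrow> (nat \<Rightarrow> real) \<Rightarrow> (nat \<Rightarrow> real)" where
  "proj0 K I p = restrict (\<lambda>k. if k \<in> I then p k else 0) {..<K}"

end

theory Submission
  imports Defs
begin

(*
  Write R_I(c) (rejection_set K D I c) for the set of p-value vectors q of the hypotheses in I such
  that D rejects some H_0k with k in I when every other p-value is set to c; the integral in the
  theorem is the uniform measure of R_I(0).

  If exactly the hypotheses in I are true, monotonicity turns a false rejection at p into one at
  p^0_I, and the true p-values are independent uniforms, so the FWER is at most |R_I(0)|.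
  Conversely, the FWER is at least |R_I(c)| times the probability that all p-values outside I are
  below c, which tends to 1 along the alternatives of (A1). By (A2) and monotonicity R_I(1/n) increases to R_I(0), so
  strong control forces |R_I(0)| <= alpha.
*)

lemma sets_PiM_cylinder:
  fixes M :: "'i \<Rightarrow> 'b measure"
  assumes "I \<subseteq> L" "finite L" "A \<in> sets (PiM I M)" "\<And>k. k \<in> L - I \<Longrightarrow> B k \<in> sets (M k)"
  shows "{p \<in> space (PiM L M). restrict p I \<in> A \<and> (\<forall>k\<in>L - I. p k \<in> B k)} \<in> sets (PiM L M)"
proof -
  have "Measurable.pred (PiM L M) (\<lambda>p. restrict p I \<in> A)"
    by (rule pred_sets2[OF assms(3) measurable_restrict_subset[OF assms(1)]])
  moreover have "Measurable.pred (PiM L M) (\<lambda>p. \<forall>k\<in>L - I. p k \<in> B k)"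
    using assms(2,4) by (intro pred_intros_finite(3) pred_sets2[OF _ measurable_component_singleton]) auto
  ultimately show ?thesis
    unfolding pred_def[symmetric] by (rule pred_intros_logic(3))
qed

lemma merge_vimage_cylinder:
  fixes M :: "'i \<Rightarrow> 'b measure"
  assumes "I \<inter> J = {}" "A \<in> sets (PiM I M)" "\<And>k. k \<in> J \<Longrightarrow> B k \<in> sets (M k)"
  shows "merge I J -` {p \<in> space (PiM (I \<union> J) M). restrict p I \<in> A \<and> (\<forall>k\<in>J. p k \<in> B k)}
           \<inter> space (PiM I M \<Otimes>\<^sub>M PiM J M) = A \<times> PiE J B"
proof (intro set_eqI)
  fix z :: "('i \<Rightarrow> 'b) \<times> ('i \<Rightarrow> 'b)"
  obtain x y where z: "z = (x, y)"
    by (cases z)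
  have "A \<subseteq> space (PiM I M)"
    using assms(2) by (rule sets.sets_into_space)
  moreover have "y \<in> PiE J B \<longleftrightarrow> y \<in> space (PiM J M) \<and> (\<forall>k\<in>J. y k \<in> B k)"
    using sets.sets_into_space[OF assms(3)] by (auto simp: space_PiM PiE_iff)
  moreover have "restrict x I = x" if "x \<in> space (PiM I M)"
    using that by (simp add: space_PiM PiE_restrict)
  moreover have "merge I J (x, y) \<in> space (PiM (I \<union> J) M)"
    if "x \<in> space (PiM I M)" "y \<in> space (PiM J M)"
    using that measurable_space[OF measurable_merge, of "(x, y)" I M J] by (simp add: space_pair_measure)
  ultimately show "z \<in> merge I J -` {p \<in> space (PiM (I \<union> J) M). restrict p I \<in> A \<and> (\<forall>k\<in>J. p k \<in> B k)}
           \<inter> space (PiM I M \<Otimes>\<^sub>M PiM J M) \<longleftrightarrow> z \<in> A \<times> PiE J B"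
    using assms(1) by (auto simp: z space_pair_measure)
qed

lemma emeasure_PiM_cylinder:
  fixes M :: "'i \<Rightarrow> 'b measure"
  assumes "product_sigma_finite M" "I \<subseteq> L" "finite L"
    and "A \<in> sets (PiM I M)" "\<And>k. k \<in> L - I \<Longrightarrow> B k \<in> sets (M k)"
  shows "emeasure (PiM L M) {p \<in> space (PiM L M). restrict p I \<in> A \<and> (\<forall>k\<in>L - I. p k \<in> B k)}
     = emeasure (PiM I M) A * (\<Prod>k\<in>L - I. emeasure (M k) (B k))"
proof -
  interpret product_sigma_finite M by fact
  interpret J: finite_product_sigma_finite M "L - I" by standard (use assms in auto)
  interpret finite_product_sigma_finite M I by standard (use assms finite_subset in auto)
  let ?C = "{p \<in> space (PiM L M). restrict p I \<in> A \<and> (\<forall>k\<in>L - I. p k \<in> B k)}"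
  have L: "I \<union> (L - I) = L"
    using assms(2) by auto
  have "emeasure (PiM L M) ?C = emeasure (distr (PiM I M \<Otimes>\<^sub>M PiM (L - I) M) (PiM L M) (merge I (L - I))) ?C"
    using distr_merge[of I "L - I"] assms L by (simp add: finite_subset)
  also have "\<dots> = emeasure (PiM I M \<Otimes>\<^sub>M PiM (L - I) M)
      (merge I (L - I) -` ?C \<inter> space (PiM I M \<Otimes>\<^sub>M PiM (L - I) M))"
    using measurable_merge[of I "L - I" M, unfolded L] assms
    by (intro emeasure_distr sets_PiM_cylinder)
  also have "\<dots> = emeasure (PiM I M \<Otimes>\<^sub>M PiM (L - I) M) (A \<times> PiE (L - I) B)"
    using merge_vimage_cylinder[of I "L - I" A M B, unfolded L] assms by simp
  also have "\<dots> = emeasure (PiM I M) A * emeasure (PiM (L - I) M) (PiE (L - I) B)"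
    using assms(3,4,5) by (intro J.emeasure_pair_measure_Times sets_PiM_I_finite) auto
  also have "\<dots> = emeasure (PiM I M) A * (\<Prod>k\<in>L - I. emeasure (M k) (B k))"
    using assms(3,5) emeasure_PiM[of "L - I" B] by simp
  finally show ?thesis .
qed

lemma measure_PiM_cylinder:
  fixes M :: "'i \<Rightarrow> 'b measure"
  assumes M: "\<And>i. prob_space (M i)" and "I \<subseteq> L" "finite L"
    and "A \<in> sets (PiM I M)" "\<And>k. k \<in> L - I \<Longrightarrow> B k \<in> sets (M k)"
  shows "measure (PiM L M) {p \<in> space (PiM L M). restrict p I \<in> A \<and> (\<forall>k\<in>L - I. p k \<in> B k)}
     = measure (PiM I M) A * (\<Prod>k\<in>L - I. measure (M k) (B k))"
proof (rule measure_eq_emeasure_eq_ennreal)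
  have "product_sigma_finite M"
    using M by (auto simp: product_sigma_finite_def prob_space_imp_sigma_finite)
  moreover have "finite_measure (PiM I M)" "\<And>i. finite_measure (M i)"
    using M by (auto intro: prob_space.finite_measure prob_space_PiM)
  ultimately show "emeasure (PiM L M) {p \<in> space (PiM L M). restrict p I \<in> A \<and> (\<forall>k\<in>L - I. p k \<in> B k)}
     = ennreal (measure (PiM I M) A * (\<Prod>k\<in>L - I. measure (M k) (B k)))"
    using emeasure_PiM_cylinder[OF \<open>product_sigma_finite M\<close> assms(2-5)]
    by (simp add: finite_measure.emeasure_eq_measure prod_ennreal ennreal_mult prod_nonneg)
qed (simp add: prod_nonneg)

lemma space_unif01 [simp]: "space unif01 = {0..1}"
  by (simp add: unif01_def space_restrict_space)

lemma prob_space_unif01: "prob_space unif01"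
  by (rule prob_spaceI) (simp add: unif01_def emeasure_restrict_space)

lemma less_in_sets_unif01:
  assumes "sets M = sets unif01"
  shows "{x \<in> space M. x < c} \<in> sets M"
proof -
  have "{x \<in> space unif01. x < c} = {0..1} \<inter> {..<c}"
    by auto
  also have "\<dots> \<in> sets unif01"
    unfolding unif01_def by (subst sets_restrict_space_iff) auto
  finally show ?thesis
    using assms sets_eq_imp_space_eq[OF assms] by simp
qed

lemma space_PiM_eq_unit_cube:
  "(\<And>k. sets (M k) = sets unif01) \<Longrightarrow> space (PiM {..<K} M) = unit_cube K"
  by (auto simp: space_PiM unit_cube_def sets_eq_imp_space_eq intro!: PiE_cong)

lemma unit_cube_memD:
  assumes "p \<in> unit_cube K" "i < K"
  shows "0 \<le> p i" "p i \<le> 1"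
  using assms by (auto simp: unit_cube_def PiE_iff)

definition measurable_policy :: "nat \<Rightarrow> ((nat \<Rightarrow> real) \<Rightarrow> nat \<Rightarrow> bool) \<Rightarrow> bool" where
  "measurable_policy K D \<longleftrightarrow> (\<forall>k<K. Measurable.pred (PiM {..<K} (\<lambda>_. unif01)) (\<lambda>p. D p k))"

definition right_continuous_policy :: "nat \<Rightarrow> ((nat \<Rightarrow> real) \<Rightarrow> nat \<Rightarrow> bool) \<Rightarrow> bool" where
  "right_continuous_policy K D \<longleftrightarrow>
     (\<forall>i<K. \<forall>k<K. \<forall>p\<in>unit_cube K.
        ((\<lambda>t. if D (p(i := t)) k then 1 else (0::real)) \<longlongrightarrow> (if D (p(i := 0)) k then 1 else 0)) (at_right 0))"

lemma monotone_policyD: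
  assumes "monotone_policy K D" "p \<in> unit_cube K" "p' \<in> unit_cube K" "\<And>i. i < K \<Longrightarrow> p' i \<le> p i"
    and "k < K" "D p k"
  shows "D p' k"
  using assms unfolding monotone_policy_def by blast

definition fill :: "nat \<Rightarrow> nat set \<Rightarrow> real \<Rightarrow> (nat \<Rightarrow> real) \<Rightarrow> nat \<Rightarrow> real" where
  "fill K I c q = restrict (\<lambda>i. if i \<in> I then q i else c) {..<K}"

lemma proj0_eq_fill: "proj0 K I = fill K I 0"
  by (simp add: fun_eq_iff proj0_def fill_def)

lemma fill_restrict [simp]: "fill K I c (restrict q I) = fill K I c q"
  unfolding fill_def by (rule restrict_ext) simp

lemma fill_in_unit_cube:
  assumes "q \<in> space (PiM I (\<lambda>_. unif01))" "0 \<le> c" "c \<le> 1"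
  shows "fill K I c q \<in> unit_cube K"
  using assms by (auto simp: fill_def unit_cube_def space_PiM PiE_iff)

lemma measurable_fill:
  assumes "0 \<le> c" "c \<le> 1"
  shows "fill K I c \<in> PiM I (\<lambda>_. unif01) \<rightarrow>\<^sub>M PiM {..<K} (\<lambda>_. unif01)"
  unfolding fill_def
proof (rule measurable_restrict)
  show "(\<lambda>q. if i \<in> I then q i else c) \<in> PiM I (\<lambda>_. unif01) \<rightarrow>\<^sub>M unif01" for i
    using assms by (cases "i \<in> I") auto
qed

definition rejection_set ::
    "nat \<Rightarrow> ((nat \<Rightarrow> real) \<Rightarrow> nat \<Rightarrow> bool) \<Rightarrow> nat set \<Rightarrow> real \<Rightarrow> (nat \<Rightarrow> real) set" where
  "rejection_set K D I c = {q \<in> space (PiM I (\<lambda>_. unif01)). \<exists>k\<in>I. D (fill K I c q) k}"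

lemma sets_rejection_set:
  assumes "measurable_policy K D" "I \<subseteq> {..<K}" "0 \<le> c" "c \<le> 1"
  shows "rejection_set K D I c \<in> sets (PiM I (\<lambda>_. unif01))"
  unfolding rejection_set_def pred_def[symmetric]
proof (rule pred_intros_finite(4))
  show "finite I"
    using assms(2) finite_subset by blast
  show "Measurable.pred (PiM I (\<lambda>_. unif01)) (\<lambda>q. D (fill K I c q) k)" if "k \<in> I" for k
    using assms that unfolding measurable_policy_def by (intro measurable_compose[OF measurable_fill]) auto
qed

lemma rejection_set_antimono:
  assumes "monotone_policy K D" "I \<subseteq> {..<K}" "0 \<le> c" "c \<le> c'" "c' \<le> 1"
  shows "rejection_set K D I c' \<subseteq> rejection_set K D I c"
proof
  fix q assume "q \<in> rejection_set K D I c'"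
  then obtain k where q: "q \<in> space (PiM I (\<lambda>_. unif01))" and k: "k \<in> I" "D (fill K I c' q) k"
    by (auto simp: rejection_set_def)
  have "fill K I c' q \<in> unit_cube K" "fill K I c q \<in> unit_cube K"
    using q assms by (auto intro: fill_in_unit_cube)
  moreover have "fill K I c q i \<le> fill K I c' q i" for i
    using \<open>c \<le> c'\<close> by (simp add: fill_def)
  moreover have "k < K"
    using k assms(2) by auto
  ultimately have "D (fill K I c q) k"
    using k(2) by (rule monotone_policyD[OF assms(1)])
  then show "q \<in> rejection_set K D I c"
    using q k by (auto simp: rejection_set_def)
qed

lemma integral_Max_eq_measure_rejection_set:
  assumes "finite I"
  shows "integral\<^sup>L (PiM I (\<lambda>_. unif01)) (\<lambda>q. Max (insert 0 ((\<lambda>k. if D (proj0 K I q) k then 1 else 0::real) ` I)))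
    = measure (PiM I (\<lambda>_. unif01)) (rejection_set K D I 0)"
proof -
  have "Max (insert 0 ((\<lambda>k. if D (proj0 K I q) k then 1 else 0::real) ` I)) = indicator (rejection_set K D I 0) q"
    if "q \<in> space (PiM I (\<lambda>_. unif01))" for q
  proof (cases "\<exists>k\<in>I. D (proj0 K I q) k")
    case True
    then have "q \<in> rejection_set K D I 0"
      using that unfolding rejection_set_def proj0_eq_fill by blast
    moreover have "Max (insert 0 ((\<lambda>k. if D (proj0 K I q) k then 1 else 0::real) ` I)) = 1"
      using True assms by (intro Max_eqI) force+
    ultimately show ?thesis
      by simp
  next
    case False
    then have "q \<notin> rejection_set K D I 0"
      unfolding rejection_set_def proj0_eq_fill by blast
    moreover have "Max (insert 0 ((\<lambda>k. if D (proj0 K I q) k then 1 else 0::real) ` I)) = 0"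
      using False assms by (intro Max_eqI) force+
    ultimately show ?thesis
      by simp
  qed
  then have "integral\<^sup>L (PiM I (\<lambda>_. unif01)) (\<lambda>q. Max (insert 0 ((\<lambda>k. if D (proj0 K I q) k then 1 else 0::real) ` I)))
      = integral\<^sup>L (PiM I (\<lambda>_. unif01)) (indicator (rejection_set K D I 0))"
    by (rule Bochner_Integration.integral_cong[OF refl])
  also have "\<dots> = measure (PiM I (\<lambda>_. unif01)) (rejection_set K D I 0)"
    by (simp add: rejection_set_def Int_absorb2)
  finally show ?thesis .
qed

lemma eventually_rejects_at_right:
  assumes A2: "right_continuous_policy K D"
    and "p \<in> unit_cube K" "i < K" "k < K" "p i = 0" "D p k"
  shows "eventually (\<lambda>t. D (p(i := t)) k) (at_right 0)"
proof -
  have "p(i := 0) = p"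
    using \<open>p i = 0\<close> by auto
  then have "((\<lambda>t. if D (p(i := t)) k then 1 else (0::real)) \<longlongrightarrow> 1) (at_right 0)"
    using assms unfolding right_continuous_policy_def by force
  then have "eventually (\<lambda>t. (if D (p(i := t)) k then 1 else (0::real)) > 1/2) (at_right 0)"
    by (rule order_tendstoD) simp
  then show ?thesis
    by (rule eventually_mono) (simp split: if_splits)
qed

lemma rejects_after_raising_zero_coordinates:
  assumes mono: "monotone_policy K D"
    and A2: "right_continuous_policy K D"
    and "finite S" "S \<subseteq> {..<K}" "k < K" "p \<in> unit_cube K" "\<forall>i\<in>S. p i = 0" "D p k"
  shows "\<exists>\<delta>>0. \<delta> \<le> 1 \<and> D (\<lambda>i. if i \<in> S then \<delta> else p i) k"
  using assms(3-)
proof (induction S arbitrary: p rule: finite_induct)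
  case empty
  then show ?case
    by (auto intro: exI[of _ 1])
next
  case (insert i S)
  have "eventually (\<lambda>t. D (p(i := t)) k) (at_right 0)"
    using insert by (intro eventually_rejects_at_right[OF A2]) auto
  then obtain b where "b > 0" and b: "\<And>t. 0 < t \<Longrightarrow> t < b \<Longrightarrow> D (p(i := t)) k"
    unfolding eventually_at_right_field by auto
  define t where "t = min (b / 2) 1"
  have t: "0 < t" "t \<le> 1" "D (p(i := t)) k"
    using \<open>b > 0\<close> b[of t] by (auto simp: t_def)
  have "p(i := t) \<in> unit_cube K"
    using insert t by (auto simp: unit_cube_def PiE_iff extensional_def)
  moreover have "\<forall>j\<in>S. (p(i := t)) j = 0"
    using insert by auto
  ultimately obtain \<delta> where \<delta>: "\<delta> > 0" "\<delta> \<le> 1" "D (\<lambda>j. if j \<in> S then \<delta> else (p(i := t)) j) k"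
    using insert.IH insert.prems t(3) by blast
  have "D (\<lambda>j. if j \<in> insert i S then min t \<delta> else p j) k"
  proof (rule monotone_policyD[OF mono _ _ _ \<open>k < K\<close> \<delta>(3)])
    show "(\<lambda>j. if j \<in> S then \<delta> else (p(i := t)) j) \<in> unit_cube K"
         "(\<lambda>j. if j \<in> insert i S then min t \<delta> else p j) \<in> unit_cube K"
      using insert t \<delta> by (auto simp: unit_cube_def PiE_iff extensional_def)
  qed auto
  then show ?case
    using t \<delta> by (intro exI[of _ "min t \<delta>"]) auto
qed

lemma UN_rejection_set:
  assumes mono: "monotone_policy K D"
    and A2: "right_continuous_policy K D"
    and "I \<subseteq> {..<K}"
  shows "(\<Union>n. rejection_set K D I (1 / Suc n)) = rejection_set K D I 0"
proof (intro antisym subsetI)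
  fix q assume "q \<in> (\<Union>n. rejection_set K D I (1 / Suc n))"
  then obtain n where "q \<in> rejection_set K D I (1 / Suc n)"
    by blast
  then show "q \<in> rejection_set K D I 0"
    using rejection_set_antimono[OF mono \<open>I \<subseteq> {..<K}\<close>, of 0 "1 / Suc n"] by auto
next
  fix q assume "q \<in> rejection_set K D I 0"
  then obtain k where q: "q \<in> space (PiM I (\<lambda>_. unif01))" and k: "k \<in> I" "D (fill K I 0 q) k"
    by (auto simp: rejection_set_def)
  have "fill K I 0 q \<in> unit_cube K"
    using q by (rule fill_in_unit_cube) auto
  moreover have "\<forall>i\<in>{..<K} - I. fill K I 0 q i = 0" "k < K"
    using k assms(3) by (auto simp: fill_def)
  ultimately obtain \<delta> where "\<delta> > 0" "\<delta> \<le> 1" and \<delta>: "D (\<lambda>i. if i \<in> {..<K} - I then \<delta> else fill K I 0 q i) k"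
    using rejects_after_raising_zero_coordinates[OF mono A2, of "{..<K} - I" k "fill K I 0 q"] k by blast
  moreover have "(\<lambda>i. if i \<in> {..<K} - I then \<delta> else fill K I 0 q i) = fill K I \<delta> q"
    by (auto simp: fill_def)
  ultimately have "q \<in> rejection_set K D I \<delta>"
    using q k by (auto simp: rejection_set_def)
  moreover obtain n where "1 / Suc n < \<delta>"
    using \<open>\<delta> > 0\<close> by (metis nat_approx_posE)
  ultimately have "q \<in> rejection_set K D I (1 / Suc n)"
    using rejection_set_antimono[OF mono \<open>I \<subseteq> {..<K}\<close>, of "1 / Suc n" \<delta>] \<open>\<delta> \<le> 1\<close> by auto
  then show "q \<in> (\<Union>n. rejection_set K D I (1 / Suc n))"
    by blast
qed

lemma measure_rejection_set_tendsto:
  assumes mono: "monotone_policy K D"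
    and A2: "right_continuous_policy K D"
    and D_meas: "measurable_policy K D"
    and "I \<subseteq> {..<K}"
  shows "(\<lambda>n. measure (PiM I (\<lambda>_. unif01)) (rejection_set K D I (1 / Suc n)))
           \<longlonglongrightarrow> measure (PiM I (\<lambda>_. unif01)) (rejection_set K D I 0)"
proof -
  interpret prob_space "PiM I (\<lambda>_. unif01)"
    by (intro prob_space_PiM prob_space_unif01)
  have "incseq (\<lambda>n. rejection_set K D I (1 / Suc n))"
    by (intro monoI rejection_set_antimono[OF mono \<open>I \<subseteq> {..<K}\<close>]) (auto simp: frac_le)
  then show ?thesis
    unfolding UN_rejection_set[OF mono A2 \<open>I \<subseteq> {..<K}\<close>, symmetric]
    using sets_rejection_set[OF D_meas \<open>I \<subseteq> {..<K}\<close>] by (intro finite_Lim_measure_incseq) auto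
qed

lemma sets_rejection_event:
  assumes D_meas: "measurable_policy K D"
    and "I \<subseteq> {..<K}" "\<And>k. sets (M k) = sets unif01"
  shows "{p \<in> space (PiM {..<K} M). \<exists>k\<in>I. D p k} \<in> sets (PiM {..<K} M)"
proof -
  have sets_eq: "sets (PiM {..<K} M) = sets (PiM {..<K} (\<lambda>_. unif01))"
    using assms(3) by (intro sets_PiM_cong) auto
  have "Measurable.pred (PiM {..<K} (\<lambda>_. unif01)) (\<lambda>p. \<exists>k\<in>I. D p k)"
    using assms(1,2) finite_subset[OF assms(2)] unfolding measurable_policy_def
    by (intro pred_intros_finite(4)) auto
  then show ?thesis
    using sets_eq sets_eq_imp_space_eq[OF sets_eq] by (simp add: pred_def)
qed

lemma measure_rejection_event_le_rejection_set:
  fixes M :: "nat \<Rightarrow> real measure"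
  assumes D_meas: "measurable_policy K D"
    and mono: "monotone_policy K D" and "I \<subseteq> {..<K}"
    and prob: "\<And>k. prob_space (M k)" and sets: "\<And>k. sets (M k) = sets unif01"
    and null: "\<And>k. k \<in> I \<Longrightarrow> M k = unif01"
  shows "measure (PiM {..<K} M) {p \<in> space (PiM {..<K} M). \<exists>k\<in>I. D p k}
    \<le> measure (PiM I (\<lambda>_. unif01)) (rejection_set K D I 0)"
proof -
  let ?J = "{..<K} - I"
  let ?C = "{p \<in> space (PiM {..<K} M). restrict p I \<in> rejection_set K D I 0 \<and> (\<forall>k\<in>?J. p k \<in> space (M k))}"
  have PiM_I: "PiM I M = PiM I (\<lambda>_. unif01)"
    by (rule PiM_cong) (simp_all add: null)
  have "{p \<in> space (PiM {..<K} M). \<exists>k\<in>I. D p k} \<subseteq> ?C"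
  proof
    fix p assume "p \<in> {p \<in> space (PiM {..<K} M). \<exists>k\<in>I. D p k}"
    then obtain k where p: "p \<in> space (PiM {..<K} M)" and k: "k \<in> I" "D p k"
      by blast
    have p01: "p \<in> unit_cube K"
      using p space_PiM_eq_unit_cube[of M K] sets by simp
    have rp: "restrict p I \<in> space (PiM I (\<lambda>_. unif01))"
      unfolding space_PiM space_unif01 restrict_PiE_iff using unit_cube_memD[OF p01] assms(3) by auto
    have "fill K I 0 p \<in> unit_cube K"
      using fill_in_unit_cube[OF rp, of 0 K] by simp
    moreover have "fill K I 0 p i \<le> p i" if "i < K" for i
      using that unit_cube_memD[OF p01 that] by (simp add: fill_def)
    moreover have "k < K"
      using k assms(3) by auto
    ultimately have "D (fill K I 0 p) k"
      using k(2) by (rule monotone_policyD[OF mono p01])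
    then have "restrict p I \<in> rejection_set K D I 0"
      using rp k by (auto simp: rejection_set_def)
    moreover have "\<forall>k\<in>?J. p k \<in> space (M k)"
      using p by (auto simp: space_PiM)
    ultimately show "p \<in> ?C"
      using p by simp
  qed
  moreover have "finite_measure (PiM {..<K} M)"
    using prob by (intro prob_space.finite_measure prob_space_PiM)
  moreover have "?C \<in> sets (PiM {..<K} M)"
    using assms(3) sets_rejection_set[OF D_meas assms(3)]
    by (intro sets_PiM_cylinder) (auto simp: PiM_I)
  ultimately have "measure (PiM {..<K} M) {p \<in> space (PiM {..<K} M). \<exists>k\<in>I. D p k} \<le> measure (PiM {..<K} M) ?C"
    by (intro finite_measure.finite_measure_mono)
  also have "\<dots> = measure (PiM I (\<lambda>_. unif01)) (rejection_set K D I 0)"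
    using measure_PiM_cylinder[OF prob assms(3), where A = "rejection_set K D I 0" and B = "\<lambda>k. space (M k)"]
      sets_rejection_set[OF D_meas assms(3)] prob_space.prob_space[OF prob]
    by (simp add: PiM_I)
  finally show ?thesis .
qed

lemma measure_rejection_set_mult_le:
  fixes M :: "nat \<Rightarrow> real measure"
  assumes D_meas: "measurable_policy K D"
    and mono: "monotone_policy K D" and "I \<subseteq> {..<K}" "0 \<le> c" "c \<le> 1"
    and prob: "\<And>k. prob_space (M k)" and sets: "\<And>k. sets (M k) = sets unif01"
    and null: "\<And>k. k \<in> I \<Longrightarrow> M k = unif01"
  shows "measure (PiM I (\<lambda>_. unif01)) (rejection_set K D I c)
      * (\<Prod>k\<in>{..<K} - I. measure (M k) {x \<in> space (M k). x < c})
    \<le> measure (PiM {..<K} M) {p \<in> space (PiM {..<K} M). \<exists>k\<in>I. D p k}"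
proof -
  let ?C = "{p \<in> space (PiM {..<K} M).
    restrict p I \<in> rejection_set K D I c \<and> (\<forall>k\<in>{..<K} - I. p k \<in> {x \<in> space (M k). x < c})}"
  have PiM_I: "PiM I M = PiM I (\<lambda>_. unif01)"
    by (rule PiM_cong) (simp_all add: null)
  have "?C \<subseteq> {p \<in> space (PiM {..<K} M). \<exists>k\<in>I. D p k}"
  proof
    fix p assume "p \<in> ?C"
    then obtain k where p: "p \<in> space (PiM {..<K} M)" and small: "\<forall>k\<in>{..<K} - I. p k < c"
      and rp: "restrict p I \<in> space (PiM I (\<lambda>_. unif01))" and k: "k \<in> I" "D (fill K I c p) k"
      by (auto simp: rejection_set_def)
    have "fill K I c p \<in> unit_cube K"
      using fill_in_unit_cube[OF rp, of c K] assms(4,5) by simp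
    moreover have "p \<in> unit_cube K"
      using p space_PiM_eq_unit_cube[of M K] sets by simp
    moreover have "p i \<le> fill K I c p i" if "i < K" for i
      using that small by (auto simp: fill_def less_imp_le)
    moreover have "k < K"
      using k assms(3) by auto
    ultimately have "D p k"
      using k(2) by (rule monotone_policyD[OF mono])
    then show "p \<in> {p \<in> space (PiM {..<K} M). \<exists>k\<in>I. D p k}"
      using p k by blast
  qed
  moreover have "finite_measure (PiM {..<K} M)"
    using prob by (intro prob_space.finite_measure prob_space_PiM)
  moreover have "{p \<in> space (PiM {..<K} M). \<exists>k\<in>I. D p k} \<in> sets (PiM {..<K} M)"
    using D_meas assms(3) sets by (rule sets_rejection_event)
  ultimately have "measure (PiM {..<K} M) ?C \<le> measure (PiM {..<K} M) {p \<in> space (PiM {..<K} M). \<exists>k\<in>I. D p k}"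
    by (intro finite_measure.finite_measure_mono)
  moreover have "measure (PiM {..<K} M) ?C
      = measure (PiM I (\<lambda>_. unif01)) (rejection_set K D I c) * (\<Prod>k\<in>{..<K} - I. measure (M k) {x \<in> space (M k). x < c})"
    using measure_PiM_cylinder[OF prob assms(3), where A = "rejection_set K D I c" and B = "\<lambda>k. {x \<in> space (M k). x < c}"]
      sets_rejection_set[OF D_meas assms(3-5)] less_in_sets_unif01[OF sets]
    by (simp add: PiM_I)
  ultimately show ?thesis
    by simp
qed

lemma measure_rejection_set_le:
  fixes M :: "nat \<Rightarrow> nat \<Rightarrow> real measure"
  assumes D_meas: "measurable_policy K D"
    and mono: "monotone_policy K D" and "I \<subseteq> {..<K}" "0 \<le> c" "c \<le> 1"
    and prob: "\<And>j k. prob_space (M j k)" and sets: "\<And>j k. sets (M j k) = sets unif01"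
    and null: "\<And>j k. k \<in> I \<Longrightarrow> M j k = unif01"
    and power: "\<And>k. k \<in> {..<K} - I \<Longrightarrow> (\<lambda>j. measure (M j k) {x \<in> space (M j k). x < c}) \<longlonglongrightarrow> 1"
    and FWER: "\<And>j. measure (PiM {..<K} (M j)) {p \<in> space (PiM {..<K} (M j)). \<exists>k\<in>I. D p k} \<le> \<alpha>"
  shows "measure (PiM I (\<lambda>_. unif01)) (rejection_set K D I c) \<le> \<alpha>"
proof -
  have "(\<lambda>j. measure (PiM I (\<lambda>_. unif01)) (rejection_set K D I c)
        * (\<Prod>k\<in>{..<K} - I. measure (M j k) {x \<in> space (M j k). x < c}))
      \<longlonglongrightarrow> measure (PiM I (\<lambda>_. unif01)) (rejection_set K D I c) * (\<Prod>k\<in>{..<K} - I. 1)"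
    using power by (intro tendsto_mult_left tendsto_prod) auto
  moreover have "measure (PiM I (\<lambda>_. unif01)) (rejection_set K D I c)
      * (\<Prod>k\<in>{..<K} - I. measure (M j k) {x \<in> space (M j k). x < c}) \<le> \<alpha>" for j
    using measure_rejection_set_mult_le[OF D_meas mono assms(3-5) prob sets null] FWER[of j] by (rule order_trans)
  ultimately show ?thesis
    by (intro LIMSEQ_le_const2) auto
qed

lemma strong_FWER_control_iff:
  "strong_FWER_control K \<Theta> P D \<alpha> \<longleftrightarrow>
     (\<forall>h \<theta>. (\<forall>k<K. (\<not> h k \<longrightarrow> \<theta> k = 0) \<and> (h k \<longrightarrow> \<theta> k \<in> \<Theta> k)) \<longrightarrow>
        measure (joint_law K P \<theta>) {p \<in> space (joint_law K P \<theta>). \<exists>k<K. \<not> h k \<and> D p k} \<le> \<alpha>)"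
proof -
  have "0 < (\<Sum>k<K. (if h k then 0 else 1) * (if D p k then 1 else 0::nat)) \<longleftrightarrow> (\<exists>k<K. \<not> h k \<and> D p k)" for h p
    by (simp only: neq0_conv[symmetric] sum_eq_0_iff finite_lessThan) auto
  then show ?thesis
    unfolding strong_FWER_control_def by presburger
qed

(* Coordinates beyond K get the uniform law, so that every coordinate is a probability space as the
  product-measure lemmas require; joint_law only looks at the coordinates below K. *)
definition coordinate_laws ::
    "nat \<Rightarrow> (nat \<Rightarrow> 'a \<Rightarrow> real measure) \<Rightarrow> (nat \<Rightarrow> 'a) \<Rightarrow> nat \<Rightarrow> real measure" where
  "coordinate_laws K P \<theta> k = (if k < K then P k (\<theta> k) else unif01)"

lemma joint_law_eq_PiM: "joint_law K P \<theta> = PiM {..<K} (coordinate_laws K P \<theta>)"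
  unfolding joint_law_def coordinate_laws_def by (rule PiM_cong) auto

lemma
  fixes \<Theta> :: "nat \<Rightarrow> 'a::zero set"
  assumes "\<forall>k<K. P k 0 = unif01" "\<forall>k<K. \<forall>\<theta>\<in>\<Theta> k. prob_space (P k \<theta>) \<and> sets (P k \<theta>) = sets unif01"
    and "\<forall>k<K. \<theta> k = 0 \<or> \<theta> k \<in> \<Theta> k"
  shows prob_space_coordinate_laws: "prob_space (coordinate_laws K P \<theta> k)"
    and sets_coordinate_laws: "sets (coordinate_laws K P \<theta> k) = sets unif01"
  using assms prob_space_unif01 by (auto simp: coordinate_laws_def)

lemma rejection_bound_imp_strong_FWER_control:
  fixes \<Theta> :: "nat \<Rightarrow> 'a::zero set"
  assumes null_uniform: "\<forall>k<K. P k 0 = unif01"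
    and alt_prob: "\<forall>k<K. \<forall>\<theta>\<in>\<Theta> k. prob_space (P k \<theta>) \<and> sets (P k \<theta>) = sets unif01"
    and D_meas: "measurable_policy K D"
    and D_mono: "monotone_policy K D"
    and bound: "\<And>I. I \<subseteq> {..<K} \<Longrightarrow> measure (PiM I (\<lambda>_. unif01)) (rejection_set K D I 0) \<le> \<alpha>"
  shows "strong_FWER_control K \<Theta> P D \<alpha>"
  unfolding strong_FWER_control_iff joint_law_eq_PiM
proof (intro allI impI)
  fix h \<theta> assume \<theta>: "\<forall>k<K. (\<not> h k \<longrightarrow> \<theta> k = 0) \<and> (h k \<longrightarrow> \<theta> k \<in> \<Theta> k)"
  define I where "I = {k. k < K \<and> \<not> h k}"
  have I: "I \<subseteq> {..<K}"
    by (auto simp: I_def)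
  have \<theta>_valid: "\<forall>k<K. \<theta> k = 0 \<or> \<theta> k \<in> \<Theta> k"
    using \<theta> by blast
  have "{p \<in> space (PiM {..<K} (coordinate_laws K P \<theta>)). \<exists>k<K. \<not> h k \<and> D p k}
      = {p \<in> space (PiM {..<K} (coordinate_laws K P \<theta>)). \<exists>k\<in>I. D p k}"
    by (auto simp: I_def)
  also have "measure (PiM {..<K} (coordinate_laws K P \<theta>)) \<dots> \<le> measure (PiM I (\<lambda>_. unif01)) (rejection_set K D I 0)"
  proof (rule measure_rejection_event_le_rejection_set[OF D_meas D_mono I])
    show "prob_space (coordinate_laws K P \<theta> k)" "sets (coordinate_laws K P \<theta> k) = sets unif01" for k
      using null_uniform alt_prob \<theta>_valid by (rule prob_space_coordinate_laws sets_coordinate_laws)+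
    show "coordinate_laws K P \<theta> k = unif01" if "k \<in> I" for k
      using that \<theta> null_uniform by (simp add: coordinate_laws_def I_def)
  qed
  also have "\<dots> \<le> \<alpha>"
    using I by (rule bound)
  finally show "measure (PiM {..<K} (coordinate_laws K P \<theta>))
      {p \<in> space (PiM {..<K} (coordinate_laws K P \<theta>)). \<exists>k<K. \<not> h k \<and> D p k} \<le> \<alpha>" .
qed

lemma strong_FWER_control_imp_rejection_bound:
  fixes \<Theta> :: "nat \<Rightarrow> 'a::zero set"
  assumes null_uniform: "\<forall>k<K. P k 0 = unif01"
    and alt_prob: "\<forall>k<K. \<forall>\<theta>\<in>\<Theta> k. prob_space (P k \<theta>) \<and> sets (P k \<theta>) = sets unif01"
    and alt_power: "\<forall>k<K. \<exists>s :: nat \<Rightarrow> 'a. (\<forall>j. s j \<in> \<Theta> k) \<and>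
               (\<forall>\<epsilon>>0. (\<lambda>j. measure (P k (s j)) {x \<in> space (P k (s j)). x < \<epsilon>}) \<longlonglongrightarrow> 1)"
    and D_meas: "measurable_policy K D"
    and D_mono: "monotone_policy K D"
    and A2: "right_continuous_policy K D"
    and FWER: "strong_FWER_control K \<Theta> P D \<alpha>" and I: "I \<subseteq> {..<K}"
  shows "measure (PiM I (\<lambda>_. unif01)) (rejection_set K D I 0) \<le> \<alpha>"
proof -
  have "\<exists>s. \<forall>k. k < K \<longrightarrow> (\<forall>j. s k j \<in> \<Theta> k) \<and>
      (\<forall>\<epsilon>>0. (\<lambda>j. measure (P k (s k j)) {x \<in> space (P k (s k j)). x < \<epsilon>}) \<longlonglongrightarrow> 1)"
    using alt_power by (intro choice) blast
  then obtain s where s: "\<And>k. k < K \<Longrightarrow> (\<forall>j. s k j \<in> \<Theta> k) \<and>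
      (\<forall>\<epsilon>>0. (\<lambda>j. measure (P k (s k j)) {x \<in> space (P k (s k j)). x < \<epsilon>}) \<longlonglongrightarrow> 1)"
    by blast
  \<comment> \<open>The nulls are exactly I; the j-th alternatives push their p-values towards 0.\<close>
  define \<theta> where "\<theta> j k = (if k \<in> I then 0 else s k j)" for j k
  let ?M = "\<lambda>j. coordinate_laws K P (\<theta> j)"
  have \<theta>_valid: "\<forall>k<K. \<theta> j k = 0 \<or> \<theta> j k \<in> \<Theta> k" for j
    using s by (auto simp: \<theta>_def)
  have FWER_j: "measure (PiM {..<K} (?M j)) {p \<in> space (PiM {..<K} (?M j)). \<exists>k\<in>I. D p k} \<le> \<alpha>" for j
  proof -
    have "(\<not> k \<notin> I \<longrightarrow> \<theta> j k = 0) \<and> (k \<notin> I \<longrightarrow> \<theta> j k \<in> \<Theta> k)" if "k < K" for k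
      using s that by (auto simp: \<theta>_def)
    then have "measure (PiM {..<K} (?M j)) {p \<in> space (PiM {..<K} (?M j)). \<exists>k<K. \<not> k \<notin> I \<and> D p k} \<le> \<alpha>"
      by (rule FWER[unfolded strong_FWER_control_iff joint_law_eq_PiM, rule_format])
    moreover have "(\<exists>k<K. \<not> k \<notin> I \<and> D p k) \<longleftrightarrow> (\<exists>k\<in>I. D p k)" for p
      using I by auto
    ultimately show ?thesis
      by simp
  qed
  have "measure (PiM I (\<lambda>_. unif01)) (rejection_set K D I (1 / Suc n)) \<le> \<alpha>" for n
  proof (rule measure_rejection_set_le[OF D_meas D_mono I _ _ _ _ _ _ FWER_j])
    show "prob_space (?M j k)" "sets (?M j k) = sets unif01" for j k
      using null_uniform alt_prob \<theta>_valid by (rule prob_space_coordinate_laws sets_coordinate_laws)+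
    show "?M j k = unif01" if "k \<in> I" for j k
      using that I null_uniform by (auto simp: coordinate_laws_def \<theta>_def)
    show "(\<lambda>j. measure (?M j k) {x \<in> space (?M j k). x < 1 / Suc n}) \<longlonglongrightarrow> 1" if "k \<in> {..<K} - I" for k
      using that s[of k] by (simp add: coordinate_laws_def \<theta>_def)
  qed auto
  then show ?thesis
    using measure_rejection_set_tendsto[OF D_mono A2 D_meas I] by (intro LIMSEQ_le_const2) auto
qed

theorem proposition2p1:
  fixes K :: nat
    and \<Theta> :: "nat \<Rightarrow> 'a::zero set"
    and P :: "nat \<Rightarrow> 'a \<Rightarrow> real measure"
    and D :: "(nat \<Rightarrow> real) \<Rightarrow> nat \<Rightarrow> bool"
    and \<alpha> :: real
  assumes null_uniform: "\<forall>k<K. P k 0 = unif01"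
    and alt_prob: "\<forall>k<K. \<forall>\<theta>\<in>\<Theta> k. prob_space (P k \<theta>) \<and> sets (P k \<theta>) = sets unif01"
    and alt_power: "\<forall>k<K. \<exists>s :: nat \<Rightarrow> 'a. (\<forall>j. s j \<in> \<Theta> k) \<and>
               (\<forall>\<epsilon>>0. (\<lambda>j. measure (P k (s j)) {x \<in> space (P k (s j)). x < \<epsilon>}) \<longlonglongrightarrow> 1)"
    and D_meas: "\<forall>k<K. Measurable.pred (PiM {..<K} (\<lambda>_. unif01)) (\<lambda>p. D p k)"
    and D_mono: "monotone_policy K D"
    and A2: "\<forall>i<K. \<forall>k<K. \<forall>p\<in>unit_cube K.
               ((\<lambda>t. if D (p(i := t)) k then 1 else (0::real))
                  \<longlongrightarrow> (if D (p(i := 0)) k then 1 else 0)) (at_right 0)"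
  shows "strong_FWER_control K \<Theta> P D \<alpha> \<longleftrightarrow>
         (\<forall>I \<subseteq> {..<K}.
            integral\<^sup>L (PiM I (\<lambda>_. unif01))
              (\<lambda>q. Max (insert 0 ((\<lambda>k. if D (proj0 K I q) k then 1 else 0::real) ` I))) \<le> \<alpha>)"
proof -
  have integral_eq: "integral\<^sup>L (PiM I (\<lambda>_. unif01))
      (\<lambda>q. Max (insert 0 ((\<lambda>k. if D (proj0 K I q) k then 1 else 0::real) ` I)))
    = measure (PiM I (\<lambda>_. unif01)) (rejection_set K D I 0)" if "I \<subseteq> {..<K}" for I
    using finite_subset[OF that finite_lessThan] by (rule integral_Max_eq_measure_rejection_set)
  have FWER_iff: "strong_FWER_control K \<Theta> P D \<alpha>
      \<longleftrightarrow> (\<forall>I \<subseteq> {..<K}. measure (PiM I (\<lambda>_. unif01)) (rejection_set K D I 0) \<le> \<alpha>)"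
    using strong_FWER_control_imp_rejection_bound[OF null_uniform alt_prob alt_power
        D_meas[folded measurable_policy_def] D_mono A2[folded right_continuous_policy_def]]
      rejection_bound_imp_strong_FWER_control[OF null_uniform alt_prob D_meas[folded measurable_policy_def] D_mono]
    by blast
  show ?thesis
    by (simp only: FWER_iff integral_eq cong: imp_cong)
qed

end
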